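(* For the step set $\mathcal A$ and for both $t_0=\tfrac12$ and $t_0=-\tfrac12$, $$Q_{\mathcal A}(x,0,t_0)=\sum_{n\ge0}\frac{T_n}{4^n}x^{2n},$$ where $(T_n)_{n\ge0}=(1,2,16,272,7936,\dots)$ is the sequence of tangent numbers, defined by $\tan x=\sum_{n\ge0}T_n\frac{x^{2n+1}}{(2n+1)!}$. Equivalently, $$Q_{\mathcal A}(x,0,\tfrac12)=2\sum_{n\ge0}(2^{2n+2}-1)\frac{(-1)^n}{n+1}B_{2n+2}x^{2n},$$ where $(B_n)_{n\ge0}$ are the Bernoulli numbers.
   Context: Let $\mathbb N=\{0,1,2,\dots\}$ and $\mathcal A=\{(-1,1),(1,1),(1,-1)\}$. $\#_{\mathcal A}\{(0,0)\xrightarrow{n}(i,j)\}$ is the number of sequences $p_0=(0,0),p_1,\dots,p_n=(i,j)$ of points of $\mathbb N^2$ with $p_m-p_{m-1}\in\mathcal A$. For $t_0\in\{\tfrac12,-\tfrac12\}$, $Q_{\mathcal A}(x,0,t_0)=\sum_{i\ge0}\big(\sum_{n\ge0}\#_{\mathcal A}\{(0,0)\xrightarrow{n}(i,0)\}t_0^n\big)x^i$ (the inner series converge). Bernoulli numbers are defined by $\sum_{n\ge0}B_n\frac{x^n}{n!}=\frac{x}{e^x-1}$. *)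

theory Defs
  imports Complex_Main
begin

definition stepsA :: "(int \<times> int) set" where
  "stepsA = {(-1, 1), (1, 1), (1, -1)}"

text \<open>Walks p_0 = (0,0), ..., p_n = (i,j) in N^2 with steps in A, encoded as
  functions nat => nat x nat that are constantly (0,0) after index n
  (this padding makes the encoding a bijection with the walks).\<close>
definition walks :: "nat \<Rightarrow> nat \<times> nat \<Rightarrow> (nat \<Rightarrow> nat \<times> nat) set" where
  "walks n q = {p. p 0 = (0, 0) \<and> p n = q \<and>
      (\<forall>m\<in>{1..n}. (int (fst (p m)) - int (fst (p (m - 1))),
                    int (snd (p m)) - int (snd (p (m - 1)))) \<in> stepsA) \<and>
      (\<forall>m>n. p m = (0, 0))}"

definition num_walks :: "nat \<Rightarrow> nat \<times> nat \<Rightarrow> nat" where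
  "num_walks n q = card (walks n q)"

definition tangent_number :: "nat \<Rightarrow> real" where
  "tangent_number = (THE T. \<exists>\<epsilon>>0. \<forall>x::real. \<bar>x\<bar> < \<epsilon> \<longrightarrow>
      (\<lambda>n. T n * x ^ (2 * n + 1) / fact (2 * n + 1)) sums tan x)"

definition bernoulli_num :: "nat \<Rightarrow> real" where
  "bernoulli_num = (THE B. \<exists>\<epsilon>>0. \<forall>x::real. x \<noteq> 0 \<and> \<bar>x\<bar> < \<epsilon> \<longrightarrow>
      (\<lambda>n. B n * x ^ n / fact n) sums (x / (exp x - 1)))"

end

(*
  At t = 1/2 the numbers G q = (\<Sum>n. #{walks of length n to q} / 2^n) satisfy
    G q = [q = 0] + 1/2 * (sum of G over the predecessors of q).
  No step decreases x + y, and on the anti-diagonal x + y = s this equation prescribes the second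
  difference of x \<mapsto> G (x, s - x) in terms of the anti-diagonal s - 2. A discrete maximum principle
  on each anti-diagonal shows that the equation has at most one solution and that every solution
  is nonnegative; the partial sums of the walk series are then dominated by it, so the series
  converges to the solution. An explicit solution is a binomial sum in the numbers g_a given by
  \<Sum>k\<le>a. (-1)^k C(2a+2, 2k+1) g_k = 2, and G (i, 0) = G (0, i) = g_(i/2) because the step set is
  symmetric. That recurrence says (\<Sum>k. g_k x^(2k+1)/(2k+1)!) * sin x = 2 - 2 cos x, so the series
  is 2 tan (x/2) and g_k = T_k / 4^k; with sinh and cosh it is 2 tanh (x/2). At t = -1/2 only the
  sign (-1)^i appears, as a walk of length n ends at an abscissa of the parity of n.
  For the Bernoulli form, the power series F with the claimed coefficients satisfies
  F x - F (2x) = x / (e^x + 1) by the tanh series, and so does x / (e^x - 1); the difference of the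
  two is invariant under doubling and tends to 0 at 0, hence vanishes.
*)
theory Submission
  imports Defs
begin

declare binomial_Suc_Suc [simp del]

section \<open>Walks and their last step\<close>

definition preds :: "nat \<times> nat \<Rightarrow> (nat \<times> nat) set" where
  "preds q = {r. (int (fst q) - int (fst r), int (snd q) - int (snd r)) \<in> stepsA}"

lemma preds_eq:
  "preds (x, y) =
     (if 0 < y then {(x + 1, y - 1)} else {}) \<union>
     (if 0 < x \<and> 0 < y then {(x - 1, y - 1)} else {}) \<union>
     (if 0 < x then {(x - 1, y + 1)} else {})"
  unfolding preds_def stepsA_def by (auto split: if_splits)

lemma finite_preds: "finite (preds q)"
  by (cases q) (simp add: preds_eq)

lemma walks_0: "walks 0 q = (if q = (0, 0) then {\<lambda>_. (0, 0)} else {})"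
  unfolding walks_def by (auto simp: fun_eq_iff) (metis neq0_conv)

lemma bij_betw_walks_Suc:
  "bij_betw (\<lambda>p. (p n, p(Suc n := (0, 0)))) (walks (Suc n) q) (SIGMA r:preds q. walks n r)"
proof (rule bij_betw_byWitness [where f' = "\<lambda>(r, p). p(Suc n := q)"])
  show "\<forall>p\<in>walks (Suc n) q. (case (p n, p(Suc n := (0, 0))) of (r, p') \<Rightarrow> p'(Suc n := q)) = p"
    by (auto simp: walks_def)
  show "\<forall>w\<in>SIGMA r:preds q. walks n r.
      ((case w of (r, p) \<Rightarrow> p(Suc n := q)) n, (case w of (r, p) \<Rightarrow> p(Suc n := q))(Suc n := (0, 0)))
      = w"
    by (auto simp: walks_def)
  show "(\<lambda>p. (p n, p(Suc n := (0, 0)))) ` walks (Suc n) q \<subseteq> (SIGMA r:preds q. walks n r)"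
  proof
    fix w assume "w \<in> (\<lambda>p. (p n, p(Suc n := (0, 0)))) ` walks (Suc n) q"
    then obtain p where p: "p \<in> walks (Suc n) q" and w: "w = (p n, p(Suc n := (0, 0)))"
      by blast
    from p have "p n \<in> preds q"
      unfolding walks_def preds_def by (auto dest!: bspec [of _ _ "Suc n"])
    moreover have "p(Suc n := (0, 0)) \<in> walks n (p n)"
      using p unfolding walks_def by auto
    ultimately show "w \<in> (SIGMA r:preds q. walks n r)"
      using w by simp
  qed
  show "(\<lambda>(r, p). p(Suc n := q)) ` (SIGMA r:preds q. walks n r) \<subseteq> walks (Suc n) q"
    by (force simp: walks_def preds_def)
qed

lemma finite_walks: "finite (walks n q)"
proof (induction n arbitrary: q)
  case 0
  then show ?case by (simp add: walks_0)
next
  case (Suc n)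
  then show ?case
    using bij_betw_walks_Suc[of n q] finite_preds by (simp add: bij_betw_finite)
qed

lemma num_walks_0: "num_walks 0 q = (if q = (0, 0) then 1 else 0)"
  by (simp add: num_walks_def walks_0)

lemma num_walks_Suc: "num_walks (Suc n) q = (\<Sum>r\<in>preds q. num_walks n r)"
  unfolding num_walks_def
  by (simp add: bij_betw_same_card [OF bij_betw_walks_Suc] card_SigmaI finite_preds finite_walks)

lemma num_walks_parity: "num_walks n q \<noteq> 0 \<Longrightarrow> even (n + fst q)"
proof (induction n arbitrary: q)
  case 0
  then show ?case by (simp add: num_walks_0 split: if_splits)
next
  case (Suc n)
  then have "(\<Sum>r\<in>preds q. num_walks n r) \<noteq> 0"
    by (simp add: num_walks_Suc)
  then obtain r where "r \<in> preds q" and "num_walks n r \<noteq> 0"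
    by (rule sum.not_neutral_contains_not_neutral)
  then have "even (n + fst r)" and "fst q = fst r + 1 \<or> fst r = fst q + 1"
    using Suc.IH unfolding preds_def stepsA_def by auto
  then show ?case by auto
qed

section \<open>The walk equation at \<open>t = 1/2\<close>\<close>

lemma path_superharmonic_nonneg:
  fixes d :: "nat \<Rightarrow> real"
  assumes super: "\<And>x. x \<le> s \<Longrightarrow>
      (if x < s then d (x + 1) else 0) + (if 0 < x then d (x - 1) else 0) \<le> 2 * d x"
    and "x \<le> s"
  shows "0 \<le> d x"
proof -
  \<comment> \<open>\<open>d x / (x + 1)\<close> is non-increasing, and the value beyond \<open>s\<close> is 0\<close>
  have ratio: "real (x + 1) * (if x < s then d (x + 1) else 0) \<le> real (x + 2) * d x"
    if "x \<le> s" for x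
    using that
  proof (induction x)
    case 0
    then show ?case using super[of 0] by simp
  next
    case (Suc m)
    then have "real (m + 1) * d (m + 1) \<le> real (m + 2) * d m"
      by simp
    moreover have "real (m + 2) * ((if Suc m < s then d (Suc m + 1) else 0) + d m)
        \<le> real (m + 2) * (2 * d (Suc m))"
      using super[of "Suc m"] Suc.prems by (intro mult_left_mono) auto
    ultimately show ?case
      by (simp add: algebra_simps)
  qed
  show ?thesis
    using \<open>x \<le> s\<close>
  proof (induction rule: inc_induct)
    case base
    show ?case using ratio[of s] by (simp add: zero_le_mult_iff)
  next
    case (step n)
    then have "0 \<le> real (n + 1) * d (n + 1)" by simp
    also have "\<dots> \<le> real (n + 2) * d n" using ratio[of n] step.hyps by simp
    finally show ?case by (simp add: zero_le_mult_iff)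
  qed
qed

fun predecessor_sum :: "(nat \<times> nat \<Rightarrow> real) \<Rightarrow> nat \<times> nat \<Rightarrow> real" where
  "predecessor_sum f (x, y) =
     (if 0 < y then f (x + 1, y - 1) else 0) +
     (if 0 < x \<and> 0 < y then f (x - 1, y - 1) else 0) +
     (if 0 < x then f (x - 1, y + 1) else 0)"

lemma sum_preds: "(\<Sum>r\<in>preds q. f r) = predecessor_sum f q"
proof (cases q)
  case (Pair x y)
  then show ?thesis
    by (cases "x = 0"; cases "y = 0") (auto simp: preds_eq)
qed

lemma predecessor_sum_diff: "predecessor_sum (\<lambda>r. f r - g r) q = predecessor_sum f q - predecessor_sum g q"
  by (cases q) simp

lemma predecessor_sum_on_diagonal:
  assumes "x \<le> s"
  shows "predecessor_sum f (x, s - x) =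
    (if x < s then f (x + 1, s - (x + 1)) else 0) +
    (if 0 < x \<and> x < s then f (x - 1, s - x - 1) else 0) +
    (if 0 < x then f (x - 1, s - (x - 1)) else 0)"
  using assms by (auto simp: Suc_diff_Suc Suc_diff_le)

lemma predecessor_sum_superharmonic_nonneg:
  assumes super: "\<And>q. predecessor_sum f q \<le> 2 * f q"
  shows "0 \<le> f q"
proof -
  have "\<forall>x y. x + y = s \<longrightarrow> 0 \<le> f (x, y)" for s
  proof (induction s rule: less_induct)
    case (less s)
    have lower: "0 \<le> f (x - 1, s - x - 1)" if "0 < x" "x < s" for x
      using less[of "x - 1 + (s - x - 1)"] that by auto
    have "0 \<le> f (x, s - x)" if "x \<le> s" for x
    proof (rule path_superharmonic_nonneg [where d = "\<lambda>x. f (x, s - x)"])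
      fix x assume "x \<le> s"
      then show "(if x < s then f (x + 1, s - (x + 1)) else 0) +
          (if 0 < x then f (x - 1, s - (x - 1)) else 0) \<le> 2 * f (x, s - x)"
        using super[of "(x, s - x)"] predecessor_sum_on_diagonal[of x s f] lower[of x]
        by (auto split: if_splits)
    qed (fact that)
    then show ?case by (metis add_diff_cancel_left' le_add1)
  qed
  then show ?thesis by (cases q) auto
qed

definition solves_walk_eq :: "(nat \<times> nat \<Rightarrow> real) \<Rightarrow> bool" where
  "solves_walk_eq f \<longleftrightarrow> (\<forall>q. f q = (if q = (0, 0) then 1 else 0) + predecessor_sum f q / 2)"

lemma solves_walk_eqD:
  "solves_walk_eq f \<Longrightarrow> f q = (if q = (0, 0) then 1 else 0) + predecessor_sum f q / 2"
  unfolding solves_walk_eq_def by blast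

lemma solves_walk_eq_unique:
  assumes "solves_walk_eq f" and "solves_walk_eq g"
  shows "f = g"
proof -
  have "0 \<le> f q - g q" if "solves_walk_eq f" "solves_walk_eq g" for f g q
  proof (rule predecessor_sum_superharmonic_nonneg [where f = "\<lambda>r. f r - g r"])
    fix q
    have "f q - g q = (predecessor_sum f q - predecessor_sum g q) / 2"
      using solves_walk_eqD [OF that(1), of q] solves_walk_eqD [OF that(2), of q]
      by (simp add: diff_divide_distrib)
    then show "predecessor_sum (\<lambda>r. f r - g r) q \<le> 2 * (f q - g q)"
      by (simp add: predecessor_sum_diff)
  qed
  from this [OF assms] this [OF assms(2,1)] show ?thesis
    by (intro ext) (meson antisym diff_ge_0_iff_ge)
qed

section \<open>An explicit solution\<close>

fun scaled_tangent :: "nat \<Rightarrow> real" where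
  "scaled_tangent a = (-1)^a / (2*a + 2) *
     (2 - (\<Sum>k<a. (-1)^k * real ((2*a + 2) choose (2*k + 1)) * scaled_tangent k))"

declare scaled_tangent.simps [simp del]

lemma scaled_tangent_rec:
  "(\<Sum>k\<le>a. (-1)^k * real ((2*a + 2) choose (2*k + 1)) * scaled_tangent k) = 2"
proof -
  let ?S = "\<Sum>k<a. (-1)^k * real ((2*a + 2) choose (2*k + 1)) * scaled_tangent k"
  have "(2*a + 2) choose (2*a + 1) = 2*a + 2"
    using binomial_Suc_n[of "2*a + 1"] by simp
  then have "(-1)^a * real ((2*a + 2) choose (2*a + 1)) * scaled_tangent a = 2 - ?S"
    by (subst scaled_tangent.simps) (simp add: field_simps flip: power_add mult_2)
  then show ?thesis
    by (simp add: lessThan_Suc_atMost[symmetric])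
qed

lemma scaled_tangent_0: "scaled_tangent 0 = 1"
  by (subst scaled_tangent.simps) simp

lemma binomial_second_difference:
  "((n + 2) choose (m + 2)) + (n choose (m + 2)) = 2 * ((n + 1) choose (m + 2)) + (n choose m)"
proof -
  have "(n + 2) choose (m + 2) = ((n + 1) choose (m + 2)) + ((n + 1) choose (m + 1))"
    and "(n + 1) choose (m + 2) = (n choose (m + 2)) + (n choose (m + 1))"
    and "(n + 1) choose (m + 1) = (n choose (m + 1)) + (n choose m)"
    by (simp_all add: numeral_2_eq_2 binomial_Suc_Suc)
  then show ?thesis by simp
qed

(* The solution on the anti-diagonal x + y = 2a, as a function of x. It is odd about x = -1, which
   is the boundary condition at x = 0; the recurrence of scaled_tangent is the one at y = 0. *)
definition diagonal_value :: "nat \<Rightarrow> nat \<Rightarrow> real" where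
  "diagonal_value a x = (\<Sum>j\<le>a. (-1)^j * real ((x + 1) choose (2*j + 1)) * scaled_tangent (a - j))"

lemma diagonal_value_0: "diagonal_value a 0 = scaled_tangent a"
  and diagonal_value_1: "diagonal_value a (Suc 0) = 2 * scaled_tangent a"
  by (simp_all add: diagonal_value_def atMost_atLeast0 sum.atLeast_Suc_atMost binomial_eq_0)

lemma diagonal_value_second_difference:
  "diagonal_value (Suc b) (z + 2) + diagonal_value (Suc b) z + diagonal_value b z
     = 2 * diagonal_value (Suc b) (z + 1)"
proof -
  define \<Delta> where
    "\<Delta> j = real ((z + 2 + 1) choose j) + real ((z + 1) choose j) - 2 * real ((z + 1 + 1) choose j)"
    for j
  have \<Delta>_Suc: "\<Delta> (2 * Suc i + 1) = real ((z + 1) choose (2*i + 1))" for i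
    using binomial_second_difference[of "z + 1" "2*i + 1"]
    unfolding \<Delta>_def by (simp add: eval_nat_numeral algebra_simps flip: of_nat_add of_nat_mult)
  have "diagonal_value (Suc b) (z + 2) + diagonal_value (Suc b) z - 2 * diagonal_value (Suc b) (z + 1)
      = (\<Sum>j\<le>Suc b. (-1)^j * scaled_tangent (Suc b - j) * \<Delta> (2*j + 1))"
    unfolding diagonal_value_def \<Delta>_def
    by (simp add: sum_distrib_left sum_subtractf algebra_simps flip: sum.distrib)
  also have "\<dots> = (\<Sum>i\<le>b. - ((-1)^i * real ((z + 1) choose (2*i + 1)) * scaled_tangent (b - i)))"
    by (subst sum.atMost_Suc_shift) (simp only: \<Delta>_Suc, simp add: \<Delta>_def ac_simps)
  also have "\<dots> = - diagonal_value b z"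
    by (simp add: diagonal_value_def sum_negf)
  finally show ?thesis by simp
qed

lemma diagonal_value_end: "diagonal_value a (2*a + 1) = 2 * (-1)^a"
proof -
  have "diagonal_value a (2*a + 1)
      = (\<Sum>k\<le>a. (-1)^(a - k) * real ((2*a + 2) choose (2*(a - k) + 1)) * scaled_tangent k)"
    unfolding diagonal_value_def
    by (rule sum.reindex_bij_witness[where i="\<lambda>k. a - k" and j="\<lambda>k. a - k"]) auto
  also have "\<dots> = (\<Sum>k\<le>a. (-1)^a * ((-1)^k * real ((2*a + 2) choose (2*k + 1)) * scaled_tangent k))"
  proof (rule sum.cong [OF refl])
    fix k assume "k \<in> {..a}"
    then have "2*(a - k) + 1 \<le> 2*a + 2" and "2*a + 2 - (2*(a - k) + 1) = 2*k + 1"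
      and sign: "(-1::real)^(a - k) = (-1)^a * (-1)^k"
      by (auto simp: neg_one_power_add_eq_neg_one_power_diff simp flip: power_add)
    then have "(2*a + 2) choose (2*(a - k) + 1) = (2*a + 2) choose (2*k + 1)"
      by (metis binomial_symmetric)
    then show "(-1)^(a - k) * real ((2*a + 2) choose (2*(a - k) + 1)) * scaled_tangent k
        = (-1)^a * ((-1)^k * real ((2*a + 2) choose (2*k + 1)) * scaled_tangent k)"
      by (simp add: sign)
  qed
  also have "\<dots> = 2 * (-1)^a"
    unfolding sum_distrib_left [symmetric] scaled_tangent_rec by simp
  finally show ?thesis .
qed

lemma diagonal_value_edge: "2 * diagonal_value (Suc b) (2*b + 2) = diagonal_value (Suc b) (2*b + 1)"
  using diagonal_value_second_difference[of b "2*b + 1"]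
    diagonal_value_end[of "Suc b"] diagonal_value_end[of b]
  by (simp add: algebra_simps)

fun explicit_gf :: "nat \<times> nat \<Rightarrow> real" where
  "explicit_gf (x, y) = (if even (x + y) then diagonal_value ((x + y) div 2) x else 0)"

lemma explicit_gf_odd: "odd (x + y) \<Longrightarrow> explicit_gf (x, y) = 0"
  by simp

lemma predecessor_sum_explicit_gf_odd:
  assumes "odd (x + y)"
  shows "predecessor_sum explicit_gf (x, y) = 0"
proof -
  have "explicit_gf (x + 1, y - 1) = 0" if "0 < y"
    using assms that by (intro explicit_gf_odd) presburger
  moreover have "explicit_gf (x - 1, y - 1) = 0" if "0 < x" "0 < y"
    using assms that by (intro explicit_gf_odd) presburger
  moreover have "explicit_gf (x - 1, y + 1) = 0" if "0 < x"
    using assms that by (intro explicit_gf_odd) presburger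
  ultimately show ?thesis
    by (auto simp del: explicit_gf.simps)
qed

lemma explicit_gf_eq:
  "explicit_gf (x, y) = (if (x, y) = (0, 0) then 1 else 0) + predecessor_sum explicit_gf (x, y) / 2"
proof (cases "even (x + y)")
  case False
  then show ?thesis
    using explicit_gf_odd predecessor_sum_explicit_gf_odd
    by (auto simp del: explicit_gf.simps predecessor_sum.simps)
next
  case True
  consider "x = 0" "y = 0" | "x = 0" "0 < y" | "0 < x" "y = 0" | "0 < x" "0 < y"
    by blast
  then show ?thesis
  proof cases
    case 1
    then show ?thesis by (simp add: diagonal_value_0 scaled_tangent_0)
  next
    case 2
    with True obtain a where "y = 2*a" and "0 < a"
      by (auto elim!: evenE)
    then have "predecessor_sum explicit_gf (x, y) = diagonal_value a (Suc 0)"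
      using 2 by simp
    with 2 \<open>y = 2*a\<close> show ?thesis
      by (simp add: diagonal_value_0 diagonal_value_1 del: predecessor_sum.simps)
  next
    case 3
    define b where "b = (x - 2) div 2"
    have "x = 2*b + 2"
      unfolding b_def using True 3 by presburger
    then have "predecessor_sum explicit_gf (x, y) = diagonal_value (Suc b) (2*b + 1)"
      using 3 by simp
    with 3 \<open>x = 2*b + 2\<close> show ?thesis
      using diagonal_value_edge[of b] by (simp del: predecessor_sum.simps)
  next
    case 4
    then obtain x' y' where xy: "x = Suc x'" "y = Suc y'"
      by (metis gr0_conv_Suc)
    from True xy have "even (x' + y')" by simp
    then obtain c where "x' + y' = 2*c" by (rule evenE)
    then have "predecessor_sum explicit_gf (x, y)
        = diagonal_value (Suc c) (x' + 2) + diagonal_value c x' + diagonal_value (Suc c) x'"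
      using xy by (simp add: algebra_simps)
    with xy \<open>x' + y' = 2*c\<close> show ?thesis
      using diagonal_value_second_difference[of c x']
      by (simp add: algebra_simps del: predecessor_sum.simps)
  qed
qed

lemma solves_walk_eq_explicit_gf: "solves_walk_eq explicit_gf"
  unfolding solves_walk_eq_def using explicit_gf_eq by (simp del: explicit_gf.simps predecessor_sum.simps)

lemma explicit_gf_nonneg: "0 \<le> explicit_gf q"
proof (rule predecessor_sum_superharmonic_nonneg)
  fix q
  show "predecessor_sum explicit_gf q \<le> 2 * explicit_gf q"
    using solves_walk_eqD [OF solves_walk_eq_explicit_gf, of q] by (simp split: if_splits)
qed

lemma explicit_gf_swap: "explicit_gf (y, x) = explicit_gf (x, y)"
proof -
  have "solves_walk_eq (\<lambda>(x, y). explicit_gf (y, x))"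
    unfolding solves_walk_eq_def
  proof (intro allI)
    fix q :: "nat \<times> nat"
    obtain x y where q: "q = (x, y)" by fastforce
    show "(case q of (x, y) \<Rightarrow> explicit_gf (y, x)) =
        (if q = (0, 0) then 1 else 0) + predecessor_sum (\<lambda>(x, y). explicit_gf (y, x)) q / 2"
      unfolding q using explicit_gf_eq[of y x] by (auto simp del: explicit_gf.simps)
  qed
  from solves_walk_eq_unique [OF this solves_walk_eq_explicit_gf] show ?thesis
    by (metis case_prod_conv)
qed

lemma explicit_gf_axis: "explicit_gf (i, 0) = (if even i then scaled_tangent (i div 2) else 0)"
  unfolding explicit_gf_swap [of i 0] by (simp add: diagonal_value_0)

section \<open>Convergence of the walk series\<close>

definition walk_gf :: "nat \<times> nat \<Rightarrow> real" where
  "walk_gf q = (\<Sum>n. real (num_walks n q) * (1/2)^n)"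

lemma walk_partial_sum_Suc:
  "(\<Sum>n<Suc N. real (num_walks n q) * (1/2)^n)
     = (if q = (0, 0) then 1 else 0) + (\<Sum>r\<in>preds q. \<Sum>n<N. real (num_walks n r) * (1/2)^n) / 2"
  by (subst sum.lessThan_Suc_shift)
    (simp add: num_walks_0 num_walks_Suc sum.swap [of _ "preds q"] sum_distrib_right
      sum_divide_distrib)

lemma walk_partial_sum_le: "(\<Sum>n<N. real (num_walks n q) * (1/2)^n) \<le> explicit_gf q"
proof (induction N arbitrary: q)
  case 0
  then show ?case by (simp add: explicit_gf_nonneg)
next
  case (Suc N)
  then have "(\<Sum>r\<in>preds q. \<Sum>n<N. real (num_walks n r) * (1/2)^n) \<le> predecessor_sum explicit_gf q"
    by (simp add: sum_mono flip: sum_preds)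
  then have "(\<Sum>n<Suc N. real (num_walks n q) * (1/2)^n)
      \<le> (if q = (0, 0) then 1 else 0) + predecessor_sum explicit_gf q / 2"
    unfolding walk_partial_sum_Suc by linarith
  also have "\<dots> = explicit_gf q"
    by (rule solves_walk_eqD [OF solves_walk_eq_explicit_gf, symmetric])
  finally show ?case .
qed

lemma walk_gf_sums: "(\<lambda>n. real (num_walks n q) * (1/2)^n) sums walk_gf q"
  unfolding walk_gf_def
  by (intro summable_sums summableI_nonneg_bounded [where x = "explicit_gf q"] walk_partial_sum_le)
    simp

lemma solves_walk_eq_walk_gf: "solves_walk_eq walk_gf"
  unfolding solves_walk_eq_def
proof
  fix q
  have "(\<lambda>N. \<Sum>n<Suc N. real (num_walks n q) * (1/2)^n) \<longlonglongrightarrow> walk_gf q"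
    using walk_gf_sums [unfolded sums_def] by (rule LIMSEQ_Suc)
  moreover have "(\<lambda>N. \<Sum>n<Suc N. real (num_walks n q) * (1/2)^n)
      \<longlonglongrightarrow> (if q = (0, 0) then 1 else 0) + (\<Sum>r\<in>preds q. walk_gf r) / 2"
    unfolding walk_partial_sum_Suc
    by (intro tendsto_intros walk_gf_sums [unfolded sums_def]) simp
  ultimately show "walk_gf q = (if q = (0, 0) then 1 else 0) + predecessor_sum walk_gf q / 2"
    by (simp add: LIMSEQ_unique sum_preds)
qed

lemma walks_sums_explicit_gf: "(\<lambda>n. real (num_walks n q) * (1/2)^n) sums explicit_gf q"
  using walk_gf_sums solves_walk_eq_unique [OF solves_walk_eq_walk_gf solves_walk_eq_explicit_gf]
  by simp

lemma walks_sums_neg_half: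
  "(\<lambda>n. real (num_walks n q) * (-1/2)^n) sums ((-1)^(fst q) * explicit_gf q)"
proof -
  have sign: "real (num_walks n q) * (-1/2)^n = (-1)^(fst q) * (real (num_walks n q) * (1/2)^n)"
    for n
  proof (cases "num_walks n q = 0")
    case False
    then have "even (n + fst q)" by (rule num_walks_parity)
    then have "(-1::real)^n = (-1)^(fst q)" by (metis neg_one_even_power neg_one_odd_power even_add)
    then show ?thesis by (simp add: power_minus' power_divide)
  qed simp
  show ?thesis
    unfolding sign by (rule sums_mult [OF walks_sums_explicit_gf])
qed

lemma walks_to_axis_sums:
  assumes "t \<in> {1/2, -1/2}"
  shows "(\<lambda>n. real (num_walks n (i, 0)) * t^n) sums explicit_gf (i, 0)"
proof -
  have sign: "(-1)^i * explicit_gf (i, 0) = explicit_gf (i, 0)"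
    by (simp add: explicit_gf_axis del: explicit_gf.simps)
  from assms consider "t = 1/2" | "t = -1/2"
    by blast
  then show ?thesis
  proof cases
    case 1
    show ?thesis
      unfolding 1 by (rule walks_sums_explicit_gf)
  next
    case 2
    show ?thesis
      unfolding 2 using walks_sums_neg_half [of "(i, 0)", unfolded fst_conv sign] .
  qed
qed

section \<open>Tangent numbers\<close>

lemma scaled_tangent_convolution:
  "(\<Sum>i\<le>k. (-1)^i * scaled_tangent i / (fact (2*i + 1) * fact (2*(k - i) + 1))) = 2 / fact (2*k + 2)"
proof -
  have "(-1)^i * scaled_tangent i / (fact (2*i + 1) * fact (2*(k - i) + 1))
      = (-1)^i * real ((2*k + 2) choose (2*i + 1)) * scaled_tangent i / fact (2*k + 2)"
    if "i \<le> k" for i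
  proof -
    have "2*k + 2 - (2*i + 1) = 2*(k - i) + 1" using that by simp
    then show ?thesis
      using that by (simp add: binomial_fact del: fact_Suc)
  qed
  then have "(\<Sum>i\<le>k. (-1)^i * scaled_tangent i / (fact (2*i + 1) * fact (2*(k - i) + 1)))
      = (\<Sum>i\<le>k. (-1)^i * real ((2*k + 2) choose (2*i + 1)) * scaled_tangent i) / fact (2*k + 2)"
    by (simp add: sum_divide_distrib)
  then show ?thesis by (simp only: scaled_tangent_rec)
qed

lemma six_power_le_fact: "(6::real)^m \<le> fact (2*m + 1)"
proof (induction m)
  case (Suc m)
  have "(6::real)^Suc m \<le> 6 * fact (2*m + 1)"
    using Suc by simp
  also have "\<dots> \<le> real ((2*m + 3) * (2*m + 2)) * fact (2*m + 1)"
    by (intro mult_right_mono) simp_all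
  also have "\<dots> = fact (2 * Suc m + 1)"
    by (simp add: algebra_simps eval_nat_numeral)
  finally show ?case .
qed simp

lemma sum_sixth_powers_le: "(\<Sum>i<k. (1/6::real)^(k - i)) \<le> 1/5"
proof (induction k)
  case (Suc k)
  have "(\<Sum>i<Suc k. (1/6::real)^(Suc k - i)) = (1/6) * (\<Sum>i<k. (1/6)^(k - i)) + 1/6"
    by (simp add: sum_distrib_left Suc_diff_le flip: power_Suc)
  with Suc show ?case by simp
qed simp

lemma scaled_tangent_bound: "\<bar>scaled_tangent k\<bar> \<le> fact (2*k + 1)"
proof (induction k rule: less_induct)
  case (less k)
  define c where "c i = (-1)^i * scaled_tangent i / fact (2*i + 1)" for i
  have abs_c: "\<bar>c i\<bar> = \<bar>scaled_tangent i\<bar> / fact (2*i + 1)" for i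
    by (simp add: c_def abs_mult del: fact_Suc)
  have c_rec: "c k = 2 / fact (2*k + 2) - (\<Sum>i<k. c i / fact (2*(k - i) + 1))"
    using scaled_tangent_convolution[of k]
    by (simp add: c_def lessThan_Suc_atMost [symmetric] del: fact_Suc)
  have "\<bar>c k\<bar> \<le> 1"
  proof (cases "k = 0")
    case False
    have "\<bar>c i / fact (2*(k - i) + 1)\<bar> \<le> (1/6)^(k - i)" if "i < k" for i
    proof -
      have "\<bar>c i\<bar> \<le> 1"
        using less [OF that] by (simp add: abs_c del: fact_Suc)
      then have "\<bar>c i / fact (2*(k - i) + 1)\<bar> \<le> 1 / fact (2*(k - i) + 1)"
        by (simp add: abs_divide divide_right_mono del: fact_Suc)
      also have "\<dots> \<le> (1/6)^(k - i)"
        using six_power_le_fact[of "k - i"] by (simp add: power_one_over divide_simps del: fact_Suc)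
      finally show ?thesis .
    qed
    then have "\<bar>\<Sum>i<k. c i / fact (2*(k - i) + 1)\<bar> \<le> 1/5"
      by (intro order_trans [OF sum_abs] order_trans [OF sum_mono sum_sixth_powers_le]) auto
    moreover have "2 / fact (2*k + 2) \<le> (1/2 :: real)"
    proof -
      have "(4::real) \<le> fact 4"
        by (simp add: eval_nat_numeral)
      also have "\<dots> \<le> fact (2*k + 2)"
        using False by (intro fact_mono) simp
      finally show ?thesis
        by (simp add: divide_simps del: fact_Suc)
    qed
    moreover have "0 \<le> 2 / (fact (2*k + 2) :: real)"
      by simp
    ultimately show ?thesis
      unfolding c_rec abs_le_iff by linarith
  qed (use c_rec in simp)
  then show ?case
    by (simp add: abs_c del: fact_Suc)
qed

lemma summable_norm_powser_bounded:
  fixes c :: "nat \<Rightarrow> real"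
  assumes "\<And>n. \<bar>c n\<bar> \<le> 1" and "\<bar>x\<bar> < 1"
  shows "summable (\<lambda>n. norm (c n * x^n))"
proof (rule summable_comparison_test [where g = "\<lambda>n. \<bar>x\<bar>^n"])
  show "\<exists>N. \<forall>n\<ge>N. norm (norm (c n * x^n)) \<le> \<bar>x\<bar>^n"
  proof (intro exI allI impI)
    fix n
    show "norm (norm (c n * x^n)) \<le> \<bar>x\<bar>^n"
      using assms(1)[of n] by (simp add: abs_mult power_abs mult_left_le_one_le)
  qed
  show "summable (\<lambda>n. \<bar>x\<bar>^n)"
    using assms(2) by simp
qed

lemma summable_norm_odd_powser_bounded:
  fixes c :: "nat \<Rightarrow> real"
  assumes "\<And>n. \<bar>c n\<bar> \<le> 1" and "\<bar>x\<bar> < 1"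
  shows "summable (\<lambda>n. norm (c n * x^(2*n + 1)))"
proof -
  have "\<bar>x^2\<bar> < 1"
    using assms(2) by (simp add: abs_square_less_1)
  from summable_mult [OF summable_norm_powser_bounded [OF assms(1) this]]
  have "summable (\<lambda>n. \<bar>x\<bar> * norm (c n * (x^2)^n))" .
  moreover have "norm (c n * x^(2*n + 1)) = \<bar>x\<bar> * norm (c n * (x^2)^n)" for n
    by (simp add: abs_mult power_abs power_mult)
  ultimately show ?thesis
    by simp
qed

lemma summable_scaled_tangent_series:
  fixes \<sigma> x :: real
  assumes "\<bar>\<sigma>\<bar> \<le> 1" and "\<bar>x\<bar> < 1"
  shows "summable (\<lambda>k. norm (\<sigma>^k * scaled_tangent k / fact (2*k + 1) * x^(2*k + 1)))"
proof (rule summable_norm_odd_powser_bounded [OF _ assms(2)])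
  fix k
  have "\<bar>\<sigma>^k\<bar> * \<bar>scaled_tangent k\<bar> \<le> 1 * fact (2*k + 1)"
    using assms(1) scaled_tangent_bound[of k]
    by (intro mult_mono) (simp_all add: power_abs power_le_one del: fact_Suc)
  then show "\<bar>\<sigma>^k * scaled_tangent k / fact (2*k + 1)\<bar> \<le> 1"
    by (simp add: abs_mult divide_simps del: fact_Suc)
qed

lemma scaled_tangent_series_convolution:
  fixes \<sigma> x :: real
  shows "(\<Sum>i\<le>k. (\<sigma>^i * scaled_tangent i / fact (2*i + 1) * x^(2*i + 1)) *
      ((-\<sigma>)^(k - i) / fact (2*(k - i) + 1) * x^(2*(k - i) + 1)))
    = (-\<sigma>)^k * 2 / fact (2*k + 2) * x^(2*k + 2)"
proof -
  have "(\<sigma>^i * scaled_tangent i / fact (2*i + 1) * x^(2*i + 1)) *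
      ((-\<sigma>)^(k - i) / fact (2*(k - i) + 1) * x^(2*(k - i) + 1))
    = (-\<sigma>)^k * x^(2*k + 2) * ((-1)^i * scaled_tangent i / (fact (2*i + 1) * fact (2*(k - i) + 1)))"
    if "i \<le> k" for i
  proof -
    have "(-\<sigma>)^k = (-\<sigma>)^i * (-\<sigma>)^(k - i)"
      using that by (simp flip: power_add)
    also have "(-\<sigma>)^i = (-1)^i * \<sigma>^i"
      by (rule power_minus)
    finally have sign: "\<sigma>^i * (-\<sigma>)^(k - i) = (-\<sigma>)^k * (-1)^i"
      by (simp add: mult_ac flip: power_mult_distrib)
    have "2*k + 2 = (2*i + 1) + (2*(k - i) + 1)"
      using that by simp
    then have power: "x^(2*i + 1) * x^(2*(k - i) + 1) = x^(2*k + 2)"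
      by (simp only: power_add)
    have "(\<sigma>^i * scaled_tangent i / fact (2*i + 1) * x^(2*i + 1)) *
        ((-\<sigma>)^(k - i) / fact (2*(k - i) + 1) * x^(2*(k - i) + 1))
      = (\<sigma>^i * (-\<sigma>)^(k - i)) * (x^(2*i + 1) * x^(2*(k - i) + 1)) *
          (scaled_tangent i / (fact (2*i + 1) * fact (2*(k - i) + 1)))"
      by (simp add: mult_ac)
    then show ?thesis
      unfolding sign power by (simp add: mult_ac)
  qed
  then have "(\<Sum>i\<le>k. (\<sigma>^i * scaled_tangent i / fact (2*i + 1) * x^(2*i + 1)) *
      ((-\<sigma>)^(k - i) / fact (2*(k - i) + 1) * x^(2*(k - i) + 1)))
    = (\<Sum>i\<le>k. (-\<sigma>)^k * x^(2*k + 2) *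
        ((-1)^i * scaled_tangent i / (fact (2*i + 1) * fact (2*(k - i) + 1))))"
    by (intro sum.cong) auto
  also have "\<dots> = (-\<sigma>)^k * x^(2*k + 2) * (2 / fact (2*k + 2))"
    by (simp only: sum_distrib_left [symmetric] scaled_tangent_convolution)
  finally show ?thesis
    by simp
qed

lemma scaled_tangent_series_product:
  fixes \<sigma> x :: real
  assumes "\<bar>\<sigma>\<bar> \<le> 1" and "\<bar>x\<bar> < 1"
  shows "(\<lambda>k. (-\<sigma>)^k * 2 / fact (2*k + 2) * x^(2*k + 2)) sums
    ((\<Sum>k. \<sigma>^k * scaled_tangent k / fact (2*k + 1) * x^(2*k + 1)) *
     (\<Sum>k. (-\<sigma>)^k / fact (2*k + 1) * x^(2*k + 1)))"
proof -
  have "summable (\<lambda>k. norm ((-\<sigma>)^k / fact (2*k + 1) * x^(2*k + 1)))"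
  proof (rule summable_norm_odd_powser_bounded [OF _ assms(2)])
    fix k
    have "\<bar>\<sigma>\<bar>^k \<le> 1"
      using assms(1) by (simp add: power_le_one)
    also have "(1::real) \<le> fact (2*k + 1)"
      by (rule fact_ge_1)
    finally show "\<bar>(-\<sigma>)^k / fact (2*k + 1)\<bar> \<le> 1"
      by (simp add: abs_divide power_abs del: fact_Suc)
  qed
  from Cauchy_product_sums [OF summable_scaled_tangent_series [OF assms] this]
  show ?thesis
    by (simp only: scaled_tangent_series_convolution)
qed

lemma sums_even_iff:
  assumes "\<And>n. odd n \<Longrightarrow> f n = 0"
  shows "(\<lambda>k. f (2*k)) sums s \<longleftrightarrow> f sums s"
proof (rule sums_mono_reindex)
  show "strict_mono (\<lambda>k::nat. 2*k)"
    by (simp add: strict_mono_def)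
  fix n assume "n \<notin> range (\<lambda>k::nat. 2*k)"
  then have "odd n" by (metis evenE rangeI)
  then show "f n = 0" by (rule assms)
qed

lemma sums_odd_iff:
  assumes "\<And>n. even n \<Longrightarrow> f n = 0"
  shows "(\<lambda>k. f (2*k + 1)) sums s \<longleftrightarrow> f sums s"
proof (rule sums_mono_reindex)
  show "strict_mono (\<lambda>k::nat. 2*k + 1)"
    by (simp add: strict_mono_def)
  fix n assume "n \<notin> range (\<lambda>k::nat. 2*k + 1)"
  then have "even n" by (metis oddE rangeI)
  then show "f n = 0" by (rule assms)
qed

lemma sinh_paired: "(\<lambda>k. 1 / fact (2*k + 1) * x^(2*k + 1)) sums sinh (x::real)"
  using sums_odd_iff [THEN iffD2, OF _ sinh_converges [of x]] by (simp add: real_scaleR_def field_simps)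

lemma cosh_paired: "(\<lambda>k. 1 / fact (2*k) * x^(2*k)) sums cosh (x::real)"
  using sums_even_iff [THEN iffD2, OF _ cosh_converges [of x]] by (simp add: real_scaleR_def field_simps)

lemma scaled_tangent_sums_tan:
  fixes x :: real
  assumes "\<bar>x\<bar> < 1"
  shows "(\<lambda>k. scaled_tangent k / fact (2*k + 1) * x^(2*k + 1)) sums (2 * tan (x/2))"
proof -
  define A where "A = (\<Sum>k. scaled_tangent k / fact (2*k + 1) * x^(2*k + 1))"
  have sums_A: "(\<lambda>k. scaled_tangent k / fact (2*k + 1) * x^(2*k + 1)) sums A"
    using summable_scaled_tangent_series [of 1 x] assms
    by (simp add: A_def summable_norm_cancel summable_sums)
  have "(\<lambda>k. (-1)^k * 2 / fact (2*k + 2) * x^(2*k + 2)) sums (A * sin x)"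
    using scaled_tangent_series_product [of 1 x] assms sin_paired [of x]
    by (simp add: A_def sums_iff)
  moreover have "(\<lambda>k. (-1)^k * 2 / fact (2*k + 2) * x^(2*k + 2)) sums (2 - 2 * cos x)"
  proof -
    have "(\<lambda>k. (-1)^Suc k / fact (2 * Suc k) * x^(2 * Suc k)) sums (cos x - 1)"
      using cos_paired [of x] by (subst sums_Suc_iff) simp
    from sums_mult [OF this, of "-2"] show ?thesis
      by (simp add: algebra_simps)
  qed
  ultimately have A_sin: "A * sin x = 2 - 2 * cos x"
    by (rule sums_unique2)
  have "A = 2 * tan (x/2)"
  proof (cases "x = 0")
    case True
    then show ?thesis by (simp add: A_def)
  next
    case False
    define h where "h = x/2"
    have "sin x \<noteq> 0"
      using False assms pi_ge_two by (subst sin_zero_pi_iff) auto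
    moreover have sin_x: "sin x = 2 * sin h * cos h" and cos_x: "cos x = 1 - 2 * sin h ^ 2"
      unfolding h_def using sin_double [of "x/2"] cos_double_sin [of "x/2"] by simp_all
    ultimately have "sin h \<noteq> 0" and "cos h \<noteq> 0"
      by auto
    have "sin h * (A * cos h) = sin h * (2 * sin h)"
      using A_sin unfolding sin_x cos_x by (simp add: power2_eq_square algebra_simps)
    with \<open>sin h \<noteq> 0\<close> have "A * cos h = 2 * sin h"
      by simp
    with \<open>cos h \<noteq> 0\<close> show ?thesis
      by (simp add: tan_def h_def field_simps)
  qed
  with sums_A show ?thesis by simp
qed

lemma scaled_tangent_sums_tanh:
  fixes x :: real
  assumes "\<bar>x\<bar> < 1"
  shows "(\<lambda>k. (-1)^k * scaled_tangent k / fact (2*k + 1) * x^(2*k + 1)) sums (2 * tanh (x/2))"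
proof -
  define A where "A = (\<Sum>k. (-1)^k * scaled_tangent k / fact (2*k + 1) * x^(2*k + 1))"
  have sums_A: "(\<lambda>k. (-1)^k * scaled_tangent k / fact (2*k + 1) * x^(2*k + 1)) sums A"
    using summable_scaled_tangent_series [of "-1" x] assms
    by (simp add: A_def summable_norm_cancel summable_sums)
  have "(\<lambda>k. 2 / fact (2*k + 2) * x^(2*k + 2)) sums (A * sinh x)"
    using scaled_tangent_series_product [of "-1" x] assms sinh_paired [of x]
    by (simp add: A_def sums_iff)
  moreover have "(\<lambda>k. 2 / fact (2*k + 2) * x^(2*k + 2)) sums (2 * cosh x - 2)"
  proof -
    have "(\<lambda>k. 1 / fact (2 * Suc k) * x^(2 * Suc k)) sums (cosh x - 1)"
      using cosh_paired [of x] by (subst sums_Suc_iff) simp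
    from sums_mult [OF this, of 2] show ?thesis
      by (simp add: algebra_simps)
  qed
  ultimately have A_sinh: "A * sinh x = 2 * cosh x - 2"
    by (rule sums_unique2)
  have "A = 2 * tanh (x/2)"
  proof (cases "x = 0")
    case True
    then show ?thesis by (simp add: A_def)
  next
    case False
    define h where "h = x/2"
    have "sinh h \<noteq> 0" and "cosh h \<noteq> 0"
      using False by (simp_all add: h_def)
    have sinh_x: "sinh x = 2 * sinh h * cosh h" and cosh_x: "cosh x = 1 + 2 * sinh h ^ 2"
      unfolding h_def using sinh_double [of "x/2"] cosh_double [of "x/2"] cosh_square_eq [of "x/2"]
      by simp_all
    have "sinh h * (A * cosh h) = sinh h * (2 * sinh h)"
      using A_sinh unfolding sinh_x cosh_x by (simp add: power2_eq_square algebra_simps)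
    with \<open>sinh h \<noteq> 0\<close> have "A * cosh h = 2 * sinh h"
      by simp
    with \<open>cosh h \<noteq> 0\<close> show ?thesis
      by (simp add: tanh_def h_def field_simps)
  qed
  with sums_A show ?thesis by simp
qed

lemma powser_coeff_eq_0_at_right:
  fixes c :: "nat \<Rightarrow> real"
  assumes "0 < \<delta>" and "\<And>y. 0 < y \<Longrightarrow> y < \<delta> \<Longrightarrow> (\<lambda>n. c n * y^n) sums 0"
  shows "c n = 0"
  using assms(2)
proof (induction n arbitrary: c)
  have coeff_0: "c 0 = 0" if sums_0: "\<And>y. 0 < y \<Longrightarrow> y < \<delta> \<Longrightarrow> (\<lambda>n. c n * y^n) sums 0" for c
  proof -
    define f where "f y = (\<Sum>n. c n * y^n)" for y
    have "summable (\<lambda>n. c n * (\<delta>/2)^n)"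
      using sums_0 [of "\<delta>/2"] assms(1) by (simp add: sums_iff)
    then have "isCont f 0"
      unfolding f_def by (rule isCont_powser) (use assms(1) in simp)
    then have "(f \<longlongrightarrow> c 0) (at_right 0)"
      by (simp add: f_def isCont_def filterlim_at_split)
    moreover have "eventually (\<lambda>y. f y = 0) (at_right 0)"
      unfolding eventually_at_right_field f_def using assms(1) sums_0
      by (intro exI [of _ \<delta>]) (auto simp: sums_iff)
    then have "(f \<longlongrightarrow> 0) (at_right 0)"
      by (rule tendsto_eventually)
    ultimately show ?thesis
      by (rule tendsto_unique [OF trivial_limit_at_right_real])
  qed
  {
    case 0
    then show ?case by (rule coeff_0)
  next
    case (Suc n)
    have "(\<lambda>n. c (Suc n) * y^n) sums 0" if "0 < y" "y < \<delta>" for y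
    proof -
      have "(\<lambda>n. c (Suc n) * y^Suc n) sums 0"
        using Suc.prems [OF that] coeff_0 [OF Suc.prems] by (subst sums_Suc_iff) simp
      from sums_mult [OF this, of "1/y"] show ?thesis
        using that by (simp add: field_simps)
    qed
    then show ?case by (rule Suc.IH)
  }
qed

lemma odd_powser_coeff_eq_0_at_right:
  fixes c :: "nat \<Rightarrow> real"
  assumes "0 < r" and "\<And>x. 0 < x \<Longrightarrow> x < r \<Longrightarrow> (\<lambda>n. c n * x^(2*n + 1)) sums 0"
  shows "c n = 0"
proof (rule powser_coeff_eq_0_at_right [of "r^2"])
  show "0 < r^2"
    using \<open>0 < r\<close> by simp
  fix y :: real assume "0 < y" "y < r^2"
  define x where "x = sqrt y"
  have "0 < x" and "x < r" and "x^2 = y"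
    using \<open>0 < r\<close> \<open>0 < y\<close> \<open>y < r^2\<close> by (simp_all add: x_def real_less_lsqrt)
  then have "(\<lambda>n. c n * x^(2*n + 1)) sums 0"
    by (intro assms(2))
  moreover have odd_power: "x^(2*n + 1) = x * y^n" for n
    using \<open>x^2 = y\<close> by (simp add: power_mult)
  ultimately have "(\<lambda>n. c n * (x * y^n)) sums 0"
    by (simp only: odd_power)
  then have "(\<lambda>n. x * (c n * y^n)) sums 0"
    by (simp add: mult.left_commute)
  from sums_mult [OF this, of "1/x"] show "(\<lambda>n. c n * y^n) sums 0"
    using \<open>0 < x\<close> by simp
qed

lemma tan_sums_tangent_series:
  fixes x :: real
  assumes "\<bar>x\<bar> < 1/2"
  shows "(\<lambda>k. 4^k * scaled_tangent k * x^(2*k + 1) / fact (2*k + 1)) sums tan x"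
proof -
  have "(2::real)^(2*k + 1) = 2 * 4^k" for k
    by (simp add: power_mult)
  then have rescale: "1/2 * (scaled_tangent k / fact (2*k + 1) * (2*x)^(2*k + 1))
      = 4^k * scaled_tangent k * x^(2*k + 1) / fact (2*k + 1)" for k
    by (simp add: power_mult_distrib del: fact_Suc)
  have "(\<lambda>k. 1/2 * (scaled_tangent k / fact (2*k + 1) * (2*x)^(2*k + 1))) sums tan x"
    using sums_mult [OF scaled_tangent_sums_tan [of "2*x"], of "1/2"] assms by simp
  then show ?thesis
    unfolding rescale .
qed

lemma tangent_number_eq: "tangent_number = (\<lambda>k. 4^k * scaled_tangent k)"
  unfolding tangent_number_def
proof (rule the_equality)
  show "\<exists>\<epsilon>>0. \<forall>x::real. \<bar>x\<bar> < \<epsilon> \<longrightarrow>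
      (\<lambda>n. 4^n * scaled_tangent n * x^(2*n + 1) / fact (2*n + 1)) sums tan x"
    using tan_sums_tangent_series by (intro exI [of _ "1/2"]) auto
next
  fix T
  assume "\<exists>\<epsilon>>0. \<forall>x::real. \<bar>x\<bar> < \<epsilon> \<longrightarrow> (\<lambda>n. T n * x^(2*n + 1) / fact (2*n + 1)) sums tan x"
  then obtain \<epsilon> where "\<epsilon> > 0"
    and T: "\<And>x. \<bar>x\<bar> < \<epsilon> \<Longrightarrow> (\<lambda>n. T n * x^(2*n + 1) / fact (2*n + 1)) sums tan x"
    by blast
  have "(T n - 4^n * scaled_tangent n) / fact (2*n + 1) = 0" for n
  proof (rule odd_powser_coeff_eq_0_at_right
      [where r = "min \<epsilon> (1/2)" and c = "\<lambda>n. (T n - 4^n * scaled_tangent n) / fact (2*n + 1)"])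
    show "0 < min \<epsilon> (1/2)"
      using \<open>\<epsilon> > 0\<close> by simp
    fix x :: real assume "0 < x" "x < min \<epsilon> (1/2)"
    then have "(\<lambda>n. T n * x^(2*n + 1) / fact (2*n + 1) - 4^n * scaled_tangent n * x^(2*n + 1) / fact (2*n + 1))
        sums (tan x - tan x)"
      by (intro sums_diff T tan_sums_tangent_series) auto
    then show "(\<lambda>n. (T n - 4^n * scaled_tangent n) / fact (2*n + 1) * x^(2*n + 1)) sums 0"
      by (simp add: algebra_simps diff_divide_distrib)
  qed
  then show "T = (\<lambda>k. 4^k * scaled_tangent k)"
    by (simp add: fun_eq_iff)
qed

section \<open>Bernoulli numbers\<close>

lemma eq_limit_if_doubling_invariant:
  fixes f :: "real \<Rightarrow> real"
  assumes lim: "(f \<longlongrightarrow> L) (at 0)"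
    and double: "\<And>y. y \<noteq> 0 \<Longrightarrow> \<bar>y\<bar> < r \<Longrightarrow> f (2 * y) = f y"
    and "x \<noteq> 0" and "\<bar>x\<bar> < r"
  shows "f x = L"
proof -
  have invariant: "f (x / 2^N) = f x" for N
  proof (induction N)
    case (Suc N)
    have "(1::real) \<le> 2^Suc N"
      by (rule one_le_power) simp
    then have "\<bar>x / 2^Suc N\<bar> \<le> \<bar>x\<bar>"
      by (simp add: abs_divide divide_le_eq mult_le_cancel_left1 del: power_Suc)
    then have "f (2 * (x / 2^Suc N)) = f (x / 2^Suc N)"
      using assms(3,4) by (intro double) simp_all
    with Suc show ?case by simp
  qed simp
  have "filterlim (\<lambda>N. x / 2^N) (at 0) sequentially"
  proof (rule filterlim_atI)
    show "(\<lambda>N. x / 2^N) \<longlonglongrightarrow> 0"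
      by (intro tendsto_divide_0 [OF tendsto_const] filterlim_realpow_sequentially_gt1) simp
  qed (use \<open>x \<noteq> 0\<close> in simp)
  from filterlim_compose [OF lim this] have "(\<lambda>N. f x) \<longlonglongrightarrow> L"
    by (simp add: invariant)
  then show ?thesis
    by (simp add: LIMSEQ_const_iff)
qed

lemma tendsto_x_over_exp_minus_1: "((\<lambda>x::real. x / (exp x - 1)) \<longlongrightarrow> 1) (at 0)"
proof -
  have "((\<lambda>h. (exp h - 1) / h) \<longlongrightarrow> (1::real)) (at 0)"
    using DERIV_exp [of 0] by (simp add: DERIV_def)
  then have "((\<lambda>h. inverse ((exp h - 1) / h)) \<longlongrightarrow> inverse (1::real)) (at 0)"
    by (rule tendsto_inverse) simp
  then show ?thesis
    by (simp add: inverse_eq_divide)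
qed

lemma x_over_exp_minus_1_doubling:
  fixes x :: real
  assumes "x \<noteq> 0"
  shows "x / (exp x - 1) - 2 * x / (exp (2 * x) - 1) = x / (exp x + 1)"
proof -
  have "x / (e - 1) - 2 * x / (e^2 - 1) = x / (e + 1)" if "e - 1 \<noteq> 0" "e + 1 \<noteq> 0" for e :: real
  proof -
    have "e * e - 1 = (e - 1) * (e + 1)"
      by (simp add: algebra_simps)
    with that have "e * e - 1 \<noteq> 0"
      by simp
    with that have "x / (e - 1) = x * (e + 1) / (e^2 - 1)" and "x / (e + 1) = x * (e - 1) / (e^2 - 1)"
      by (simp_all add: field_simps power2_eq_square)
    moreover have "x * (e + 1) - 2 * x = x * (e - 1)"
      by (simp add: algebra_simps)
    ultimately show ?thesis
      by (simp add: diff_divide_distrib [symmetric])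
  qed
  moreover have "exp x - 1 \<noteq> 0" and "exp x + 1 \<noteq> 0"
    using assms exp_gt_zero [of x] by (simp, linarith)
  ultimately show ?thesis
    unfolding exp_double by blast
qed

lemma tanh_half: "tanh (x/2) = (exp x - 1) / (exp x + 1)" for x :: real
proof -
  have "exp x * (1 - exp (-x)) = exp x - 1" and "exp x * (1 + exp (-x)) = exp x + 1"
    by (simp_all add: algebra_simps exp_minus_inverse)
  then have "(exp x - 1) / (exp x + 1) = (1 - exp (-x)) / (1 + exp (-x))"
    by (metis mult_divide_mult_cancel_left exp_not_eq_zero)
  then show ?thesis
    by (simp add: tanh_real_altdef)
qed

definition bernoulli_from_tangent :: "nat \<Rightarrow> real" where
  "bernoulli_from_tangent n =
     (if n = 0 then 1 else if n = 1 then -1/2 else if odd n then 0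
      else (-1)^(n div 2 + 1) * n * scaled_tangent (n div 2 - 1) / (4 * (2^n - 1)))"

lemma bernoulli_from_tangent_even:
  "bernoulli_from_tangent (2*k + 2) =
     (-1)^k * (2*k + 2) * scaled_tangent k / (4 * (4^(k + 1) - 1))"
  by (simp add: bernoulli_from_tangent_def power_mult)

lemma four_power_Suc_minus_1_ge: "(1::real) \<le> 4 * (4^(k + 1) - 1)"
proof -
  have "(1::real) \<le> 4^k"
    by (simp add: one_le_power)
  moreover have "4 * (4^(k + 1) - 1) = 16 * 4^k - (4::real)"
    by (simp add: algebra_simps)
  ultimately show ?thesis
    by linarith
qed

lemma bernoulli_from_tangent_even_div_fact:
  "bernoulli_from_tangent (2*k + 2) / fact (2*k + 2)
     = (-1)^k * (scaled_tangent k / fact (2*k + 1)) / (4 * (4^(k + 1) - 1))"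
proof -
  have cancel: "s * m * t / Q / (m * F) = s * (t / F) / Q" if "m \<noteq> 0" for s m t Q F :: real
    using that by simp
  have "fact (2*k + 2) = (2 * real k + 2) * (fact (2*k + 1) :: real)"
    by simp
  then show ?thesis
    unfolding bernoulli_from_tangent_even by (simp only: cancel)
qed

lemma bernoulli_from_tangent_bound: "\<bar>bernoulli_from_tangent n / fact n\<bar> \<le> 1"
proof (cases "n \<le> 1 \<or> odd n")
  case True
  then show ?thesis
    by (auto simp: bernoulli_from_tangent_def le_Suc_eq)
next
  case False
  define k where "k = n div 2 - 1"
  have n: "n = 2*k + 2"
    using False unfolding k_def by presburger
  have "\<bar>bernoulli_from_tangent n / fact n\<bar> \<le> \<bar>scaled_tangent k\<bar> / fact (2*k + 1) / 1"
    unfolding n bernoulli_from_tangent_even_div_fact using four_power_Suc_minus_1_ge [of k]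
    by (simp add: abs_mult abs_divide divide_left_mono del: fact_Suc)
  also have "\<dots> \<le> 1"
    using scaled_tangent_bound [of k] by (simp del: fact_Suc)
  finally show ?thesis .
qed

lemma bernoulli_from_tangent_doubling:
  fixes x :: real
  assumes "\<bar>x\<bar> < 1/2"
  shows "(\<lambda>n. bernoulli_from_tangent n / fact n * x^n - bernoulli_from_tangent n / fact n * (2*x)^n)
    sums (x / (exp x + 1))"
proof -
  define g where
    "g n = bernoulli_from_tangent n / fact n * x^n - bernoulli_from_tangent n / fact n * (2*x)^n" for n
  have "g (2*k + 2) = -(x/4) * ((-1)^k * scaled_tangent k / fact (2*k + 1) * x^(2*k + 1))" for k
  proof -
    have pow: "(2*x)^(2*k + 2) = 4^(k + 1) * x^(2*k + 2)"
      by (simp add: power_mult_distrib power_mult flip: mult_2_right)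
    have "g (2*k + 2) = bernoulli_from_tangent (2*k + 2) / fact (2*k + 2) * (1 - 4^(k + 1)) * x^(2*k + 2)"
      unfolding g_def pow by (simp only: right_diff_distrib left_diff_distrib mult_ac mult_1_right)
    also have "\<dots> = -(x/4) * ((-1)^k * scaled_tangent k / fact (2*k + 1) * x^(2*k + 1))"
      unfolding bernoulli_from_tangent_even_div_fact using four_power_Suc_minus_1_ge [of k]
      by (simp add: field_simps del: fact_Suc)
    finally show ?thesis .
  qed
  then have "(\<lambda>k. g (2*k + 2)) sums (-(x/4) * (2 * tanh (x/2)))"
    using sums_mult [OF scaled_tangent_sums_tanh, of x "-(x/4)"] assms by simp
  then have "(\<lambda>n. g (n + 2)) sums (-(x/4) * (2 * tanh (x/2)))"
    by (subst sums_even_iff [symmetric]) (auto simp: g_def bernoulli_from_tangent_def)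
  then have "g sums (-(x/4) * (2 * tanh (x/2)) + (\<Sum>n<2. g n))"
    by (rule sums_iff_shift [THEN iffD1])
  moreover have "-(x/4) * (2 * tanh (x/2)) + (\<Sum>n<2. g n) = x / (exp x + 1)"
  proof -
    have "0 < exp x + 1"
      by (simp add: add_pos_pos)
    then show ?thesis
      unfolding tanh_half by (simp add: numeral_2_eq_2 g_def bernoulli_from_tangent_def field_simps)
  qed
  ultimately show ?thesis
    unfolding g_def by simp
qed

definition bernoulli_gf :: "real \<Rightarrow> real" where
  "bernoulli_gf x = (\<Sum>n. bernoulli_from_tangent n / fact n * x^n)"

lemma bernoulli_gf_sums:
  "\<bar>x\<bar> < 1 \<Longrightarrow> (\<lambda>n. bernoulli_from_tangent n / fact n * x^n) sums bernoulli_gf x"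
  unfolding bernoulli_gf_def
  by (rule summable_sums, rule summable_norm_cancel,
      rule summable_norm_powser_bounded [OF bernoulli_from_tangent_bound])

lemma bernoulli_gf_eq:
  assumes "x \<noteq> 0" and "\<bar>x\<bar> < 1/2"
  shows "bernoulli_gf x = x / (exp x - 1)"
proof -
  let ?D = "\<lambda>y. bernoulli_gf y - y / (exp y - 1)"
  have "(bernoulli_gf \<longlongrightarrow> bernoulli_from_tangent 0 / fact 0) (at 0)"
  proof (rule powser_limit_0)
    show "norm x < 1 \<Longrightarrow> (\<lambda>n. bernoulli_from_tangent n / fact n * x^n) sums bernoulli_gf x" for x
      by (rule bernoulli_gf_sums) simp
  qed simp
  then have "(?D \<longlongrightarrow> 0) (at 0)"
    using tendsto_diff [OF _ tendsto_x_over_exp_minus_1, of bernoulli_gf 1]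
    by (simp add: bernoulli_from_tangent_def)
  moreover have "?D (2 * y) = ?D y" if "y \<noteq> 0" and "\<bar>y\<bar> < 1/2" for y
  proof -
    have "(\<lambda>n. bernoulli_from_tangent n / fact n * y^n - bernoulli_from_tangent n / fact n * (2*y)^n)
        sums (bernoulli_gf y - bernoulli_gf (2 * y))"
      using that by (intro sums_diff bernoulli_gf_sums) auto
    from this bernoulli_from_tangent_doubling [OF that(2)]
    have "bernoulli_gf y - bernoulli_gf (2 * y) = y / (exp y + 1)"
      by (rule sums_unique2)
    then show ?thesis
      using x_over_exp_minus_1_doubling [OF \<open>y \<noteq> 0\<close>] by linarith
  qed
  ultimately have "?D x = 0"
    using assms by (rule eq_limit_if_doubling_invariant)
  then show ?thesis
    by simp
qed

lemma bernoulli_from_tangent_sums: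
  assumes "x \<noteq> 0" and "\<bar>x\<bar> < 1/2"
  shows "(\<lambda>n. bernoulli_from_tangent n * x^n / fact n) sums (x / (exp x - 1))"
  using bernoulli_gf_sums [of x] bernoulli_gf_eq [OF assms] assms(2) by simp

lemma bernoulli_num_eq: "bernoulli_num = bernoulli_from_tangent"
  unfolding bernoulli_num_def
proof (rule the_equality)
  show "\<exists>\<epsilon>>0. \<forall>x::real. x \<noteq> 0 \<and> \<bar>x\<bar> < \<epsilon> \<longrightarrow>
      (\<lambda>n. bernoulli_from_tangent n * x^n / fact n) sums (x / (exp x - 1))"
    using bernoulli_from_tangent_sums by (intro exI [of _ "1/2"]) auto
next
  fix B
  assume "\<exists>\<epsilon>>0. \<forall>x::real. x \<noteq> 0 \<and> \<bar>x\<bar> < \<epsilon> \<longrightarrow>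
      (\<lambda>n. B n * x^n / fact n) sums (x / (exp x - 1))"
  then obtain \<epsilon> where "\<epsilon> > 0"
    and B: "\<And>x. x \<noteq> 0 \<Longrightarrow> \<bar>x\<bar> < \<epsilon> \<Longrightarrow> (\<lambda>n. B n * x^n / fact n) sums (x / (exp x - 1))"
    by blast
  have "(B n - bernoulli_from_tangent n) / fact n = 0" for n
  proof (rule powser_coeff_eq_0_at_right
      [where \<delta> = "min \<epsilon> (1/2)" and c = "\<lambda>n. (B n - bernoulli_from_tangent n) / fact n"])
    show "0 < min \<epsilon> (1/2)"
      using \<open>\<epsilon> > 0\<close> by simp
    fix y :: real assume "0 < y" "y < min \<epsilon> (1/2)"
    then have "(\<lambda>n. B n * y^n / fact n - bernoulli_from_tangent n * y^n / fact n)
        sums (y / (exp y - 1) - y / (exp y - 1))"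
      by (intro sums_diff B bernoulli_from_tangent_sums) auto
    then show "(\<lambda>n. (B n - bernoulli_from_tangent n) / fact n * y^n) sums 0"
      by (simp add: algebra_simps diff_divide_distrib)
  qed
  then show "B = bernoulli_from_tangent"
    by (simp add: fun_eq_iff)
qed

lemma bernoulli_num_tangent_relation:
  assumes "even i"
  shows "2 * (2^(i + 2) - 1) * (-1)^(i div 2) / real (i div 2 + 1) * bernoulli_num (i + 2)
    = scaled_tangent (i div 2)"
proof -
  obtain m where i: "i = 2*m"
    using assms by (rule evenE)
  define Q :: real where "Q = 4^(m + 1) - 1"
  have "Q \<noteq> 0"
    using one_less_power [of "4::real" "m + 1"] by (simp add: Q_def)
  have power: "(2::real)^(i + 2) - 1 = Q"
    by (simp add: Q_def i power_mult flip: mult_Suc_right)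
  have bernoulli: "bernoulli_num (i + 2) = (-1)^m * (2 * real (m + 1)) * scaled_tangent m / (4 * Q)"
    unfolding i bernoulli_num_eq bernoulli_from_tangent_even Q_def by (simp add: algebra_simps)
  have index: "i div 2 = m"
    by (simp add: i)
  have cancel: "2 * Q * s / M * (s * (2 * M) * t / (4 * Q)) = s * s * t" if "M \<noteq> 0" for s M t :: real
    using that \<open>Q \<noteq> 0\<close> by (simp add: field_simps)
  have "(-1::real)^m * (-1)^m = 1"
    by (simp flip: power_add)
  then show ?thesis
    unfolding power bernoulli index by (subst cancel) simp_all
qed

theorem theorem1p3:
  shows "(\<forall>t0 \<in> {1/2, -1/2 :: real}. \<forall>i::nat.
            (\<lambda>n. real (num_walks n (i, 0)) * t0 ^ n) sums
              (if even i then tangent_number (i div 2) / 4 ^ (i div 2) else 0))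
       \<and> (\<forall>i::nat.
            (\<lambda>n. real (num_walks n (i, 0)) * (1/2) ^ n) sums
              (if even i then
                 2 * (2 ^ (i + 2) - 1) * (-1) ^ (i div 2) / real (i div 2 + 1)
                   * bernoulli_num (i + 2)
               else 0))"
proof (intro conjI ballI allI)
  fix t0 :: real and i :: nat
  assume "t0 \<in> {1/2, -1/2}"
  have "(if even i then tangent_number (i div 2) / 4 ^ (i div 2) else 0) = explicit_gf (i, 0)"
    by (simp add: tangent_number_eq explicit_gf_axis del: explicit_gf.simps)
  with walks_to_axis_sums [OF \<open>t0 \<in> {1/2, -1/2}\<close>]
  show "(\<lambda>n. real (num_walks n (i, 0)) * t0 ^ n) sums
      (if even i then tangent_number (i div 2) / 4 ^ (i div 2) else 0)"
    by simp
next
  fix i :: nat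
  have "(if even i then
          2 * (2 ^ (i + 2) - 1) * (-1) ^ (i div 2) / real (i div 2 + 1) * bernoulli_num (i + 2)
        else 0) = explicit_gf (i, 0)"
    unfolding explicit_gf_axis using bernoulli_num_tangent_relation [of i] by simp
  with walks_to_axis_sums [of "1/2"]
  show "(\<lambda>n. real (num_walks n (i, 0)) * (1/2) ^ n) sums
      (if even i then
         2 * (2 ^ (i + 2) - 1) * (-1) ^ (i div 2) / real (i div 2 + 1) * bernoulli_num (i + 2)
       else 0)"
    by simp
qed

end
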